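(* There is an absolute constant $\beta>0$ such that the following holds. Let $X\subset\mathbb{R}^d$ be a finite data set with $|X|=n$, let $\varepsilon\in(0,1)$, and let $C=\{c_1,\dots,c_m\}\subset\mathbb{R}^d$ be a finite nonempty set of projection centers. For each $i$, let $N_i$ be an $\varepsilon$-net of the unit sphere centered at $c_i$, and for $u\in N_i$ let $l_{iu}$ be the line through $c_i$ and $u$; let $\mathcal{L}:=\{l_{iu}: i\in\{1,\dots,m\},u\in N_i\}$. Let $X'$ be the multiset obtained by replacing each $x\in X$ by its orthogonal projection onto a nearest line of $\mathcal{L}$. Then for every finite nonempty $C'\subset\mathbb{R}^d$ and every $p\in\{1,\dots,n\}$, $$|\mathrm{cost}_p(X', C') - \mathrm{cost}_p(X, C')| \leq \beta\,\varepsilon \cdot \mathrm{cost}_p(X, C).$$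
   Context: Distances are Euclidean and $d(x,C):=\min_{c\in C}d(x,c)$. For a finite multiset $Y$ and finite nonempty $C$, $\mathrm{cost}_p(Y,C)$ is the sum of the $p$ largest values of $d(y,C)$, $y\in Y$, counted with multiplicity. *)

theory Defs
  imports Complex_Main "HOL-Library.Multiset"
begin

text \<open>Points of R^d are represented as functions nat => real vanishing outside {..<d},
  so that the dimension d can be quantified inside the statement (the constant beta
  must not depend on d).\<close>

type_synonym pt = "nat \<Rightarrow> real"

definition Rd :: "nat \<Rightarrow> pt set" where
  "Rd d = {x. \<forall>i\<ge>d. x i = 0}"

definition edist :: "nat \<Rightarrow> pt \<Rightarrow> pt \<Rightarrow> real" where
  "edist d x y = sqrt (\<Sum>i<d. (x i - y i)^2)"

definition setdist :: "nat \<Rightarrow> pt \<Rightarrow> pt set \<Rightarrow> real" where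
  "setdist d x C = Min (edist d x ` C)"

definition costp :: "nat \<Rightarrow> nat \<Rightarrow> pt multiset \<Rightarrow> pt set \<Rightarrow> real" where
  "costp d p Y C = sum_list (take p (rev (sorted_list_of_multiset (image_mset (\<lambda>y. setdist d y C) Y))))"

text \<open>A line through c and u is represented by the pair (c,u); its points are c + t(u-c).\<close>

definition proj_line :: "nat \<Rightarrow> pt \<times> pt \<Rightarrow> pt \<Rightarrow> pt" where
  "proj_line d l x = (let c = fst l; u = snd l;
      t = (\<Sum>i<d. (x i - c i) * (u i - c i)) / (\<Sum>i<d. (u i - c i)^2)
    in (\<lambda>i. c i + t * (u i - c i)))"

definition line_dist :: "nat \<Rightarrow> pt \<Rightarrow> pt \<times> pt \<Rightarrow> real" where
  "line_dist d x l = edist d x (proj_line d l x)"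

definition is_sphere_net :: "nat \<Rightarrow> real \<Rightarrow> pt \<Rightarrow> pt set \<Rightarrow> bool" where
  "is_sphere_net d \<epsilon> c N \<longleftrightarrow> finite N \<and> N \<subseteq> {u \<in> Rd d. edist d u c = 1} \<and>
     (\<forall>y \<in> Rd d. edist d y c = 1 \<longrightarrow> (\<exists>u\<in>N. edist d y u \<le> \<epsilon>))"

end

theory Submission
  imports Defs "HOL-Analysis.L2_Norm"
begin

text \<open>Let \<open>h x = d(x,C)\<close>. For a nearest centre \<open>c\<close> the direction of \<open>x - c\<close> is
  \<open>\<epsilon>\<close>-close to some net point \<open>u\<close>, so the line through \<open>c\<close> and \<open>u\<close> passes within
  \<open>\<epsilon> h x\<close> of \<open>x\<close>; hence so does the nearest line, and moving \<open>x\<close> to its projection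
  changes \<open>d(x,C')\<close> by at most \<open>\<epsilon> h x\<close>. Finally, a pointwise bound
  \<open>g \<le> f + \<epsilon> h\<close> passes to sums of the \<open>p\<close> largest values, because such a sum is
  the maximum of the sums over \<open>p\<close>-element subsets. This gives \<open>\<beta> = 1\<close>.\<close>

definition top_sum :: "nat \<Rightarrow> 'a::{linorder,comm_monoid_add} multiset \<Rightarrow> 'a" where
  "top_sum p M = sum_list (take p (rev (sorted_list_of_multiset M)))"

lemma sum_le_sum_of_dominating:
  fixes f :: "'b \<Rightarrow> 'a::ordered_comm_monoid_add"
  assumes "finite X" "A \<subseteq> X" "S \<subseteq> X" "card S = card A"
    and dom: "\<And>a b. a \<in> A \<Longrightarrow> b \<in> X - A \<Longrightarrow> f b \<le> f a"
  shows "sum f S \<le> sum f A"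
proof -
  have fin: "finite A" "finite S" using assms by (auto intro: finite_subset)
  have "card (S - A) = card (A - S)"
    using assms(4) card_Int_Diff[OF fin(2), of A] card_Int_Diff[OF fin(1), of S]
    by (simp add: Int_commute)
  then obtain h where h: "bij_betw h (S - A) (A - S)"
    using finite_same_card_bij fin by blast
  have "sum f (S - A) \<le> sum (\<lambda>b. f (h b)) (S - A)"
    using dom h assms(3) by (intro sum_mono) (auto dest: bij_betwE)
  also have "\<dots> = sum f (A - S)" using sum.reindex_bij_betw[OF h] .
  finally have "sum f (S \<inter> A) + sum f (S - A) \<le> sum f (A \<inter> S) + sum f (A - S)"
    by (simp add: Int_commute add_left_mono)
  then show ?thesis using sum.Int_Diff fin by metis
qed

lemma top_sum_attained:
  fixes f :: "'b \<Rightarrow> 'a::{linorder,comm_monoid_add}"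
  assumes X: "finite X" and p: "p \<le> card X"
  obtains A where "A \<subseteq> X" "card A = p" "top_sum p (image_mset f (mset_set X)) = sum f A"
    "\<And>a b. a \<in> A \<Longrightarrow> b \<in> X - A \<Longrightarrow> f b \<le> f a"
proof -
  obtain L where L: "distinct L" "set L = X" using finite_distinct_list[OF X] by blast
  define ys where "ys = sort_key f L"
  define k where "k = card X - p"
  have ys: "distinct ys" "set ys = X" "length ys = card X"
    using L by (auto simp: ys_def distinct_card[symmetric])
  have sorted: "sorted (map f ys)" by (simp add: ys_def)
  have "sorted_list_of_multiset (image_mset f (mset_set X)) = map f ys"
    using sorted mset_set_set[OF ys(1)] ys(2) by (simp add: sorted_sort_id flip: mset_map)
  then have "top_sum p (image_mset f (mset_set X)) = sum_list (map f (drop k ys))"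
    by (simp add: top_sum_def take_rev ys(3) k_def drop_map)
  also have "\<dots> = sum f (set (drop k ys))"
    using ys(1) by (simp add: sum_list_distinct_conv_sum_set)
  finally have top: "top_sum p (image_mset f (mset_set X)) = sum f (set (drop k ys))" .
  have "f b \<le> f a" if a: "a \<in> set (drop k ys)" and b: "b \<in> X - set (drop k ys)" for a b
  proof -
    have "b \<in> set (take k ys)"
      using b ys(2) by (metis DiffE Un_iff append_take_drop_id set_append)
    then obtain i where i: "i < length (take k ys)" "b = take k ys ! i"
      by (auto simp: in_set_conv_nth)
    obtain j where j: "j < length (drop k ys)" "a = drop k ys ! j"
      using a by (auto simp: in_set_conv_nth)
    show ?thesis using sorted_nth_mono[OF sorted, of i "k + j"] i j by simp
  qed
  moreover have "set (drop k ys) \<subseteq> X" "card (set (drop k ys)) = p"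
    using ys p by (auto simp: distinct_card k_def dest: in_set_dropD)
  ultimately show thesis using that top by blast
qed

lemma sum_le_top_sum:
  fixes f :: "'b \<Rightarrow> 'a::{linorder,ordered_comm_monoid_add}"
  assumes "finite X" "S \<subseteq> X"
  shows "sum f S \<le> top_sum (card S) (image_mset f (mset_set X))"
proof -
  obtain A where "A \<subseteq> X" "card A = card S"
    "top_sum (card S) (image_mset f (mset_set X)) = sum f A"
    "\<And>a b. a \<in> A \<Longrightarrow> b \<in> X - A \<Longrightarrow> f b \<le> f a"
    using top_sum_attained assms card_mono by metis
  then show ?thesis using sum_le_sum_of_dominating assms by metis
qed

lemma top_sum_le_add:
  fixes f g h :: "'b \<Rightarrow> real"
  assumes X: "finite X" and p: "p \<le> card X" and e: "e \<ge> 0"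
    and le: "\<And>x. x \<in> X \<Longrightarrow> g x \<le> f x + e * h x"
  shows "top_sum p (image_mset g (mset_set X))
    \<le> top_sum p (image_mset f (mset_set X)) + e * top_sum p (image_mset h (mset_set X))"
proof -
  obtain S where S: "S \<subseteq> X" "card S = p" "top_sum p (image_mset g (mset_set X)) = sum g S"
    using top_sum_attained[OF X p] by metis
  have "sum g S \<le> sum f S + e * sum h S"
    using S le sum_mono[of S g "\<lambda>x. f x + e * h x"]
    by (auto simp: sum.distrib sum_distrib_left)
  also have "\<dots> \<le> top_sum p (image_mset f (mset_set X)) + e * top_sum p (image_mset h (mset_set X))"
    using sum_le_top_sum[OF X S(1)] S(2) e by (intro add_mono mult_left_mono) auto
  finally show ?thesis using S(3) by simp
qed

lemma costp_image_mset:
  "costp d p (image_mset G M) C = top_sum p (image_mset (\<lambda>x. setdist d (G x) C) M)"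
  by (simp add: costp_def top_sum_def image_mset.compositionality comp_def)

lemma edist_eq_L2_set: "edist d x y = L2_set (\<lambda>i. x i - y i) {..<d}"
  by (simp add: edist_def L2_set_def)

lemma edist_triangle: "edist d x z \<le> edist d x y + edist d y z"
  using L2_set_triangle_ineq[of "\<lambda>i. x i - y i" "\<lambda>i. y i - z i" "{..<d}"]
  by (simp add: edist_eq_L2_set)

lemma edist_commute: "edist d x y = edist d y x"
  unfolding edist_def by (simp add: power2_commute)

lemma edist_nonneg: "edist d x y \<ge> 0"
  by (simp add: edist_def sum_nonneg)

lemma edist_scale: "edist d (\<lambda>i. r * a i) (\<lambda>i. r * b i) = \<bar>r\<bar> * edist d a b"
proof -
  have "(\<Sum>i<d. (r * a i - r * b i)^2) = r^2 * (\<Sum>i<d. (a i - b i)^2)"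
    by (simp add: sum_distrib_left power2_eq_square algebra_simps)
  then show ?thesis by (simp add: edist_def real_sqrt_mult)
qed

lemma setdist_nonneg:
  assumes "finite C" "C \<noteq> {}"
  shows "setdist d x C \<ge> 0"
  using assms by (simp add: setdist_def edist_nonneg)

lemma setdist_lipschitz:
  assumes "finite C" "C \<noteq> {}"
  shows "\<bar>setdist d x C - setdist d y C\<bar> \<le> edist d x y"
proof -
  have le: "setdist d x C \<le> setdist d y C + edist d x y" for x y
  proof -
    have "setdist d y C \<in> edist d y ` C" unfolding setdist_def using assms by (intro Min_in) auto
    then obtain c where c: "c \<in> C" "setdist d y C = edist d y c" by blast
    have "setdist d x C \<le> edist d x c" unfolding setdist_def using assms c by auto
    also have "\<dots> \<le> edist d x y + edist d y c" by (rule edist_triangle)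
    finally show ?thesis using c by simp
  qed
  show ?thesis using le[of x y] le[of y x] edist_commute[of d x y] by auto
qed

lemma proj_line_le:
  assumes "(\<Sum>i<d. (u i - c i)^2) \<noteq> 0"
  shows "edist d x (proj_line d (c,u) x) \<le> edist d x (\<lambda>i. c i + s * (u i - c i))"
proof -
  define W P V where "W = (\<Sum>i<d. (x i - c i)^2)"
    and "P = (\<Sum>i<d. (x i - c i) * (u i - c i))" and "V = (\<Sum>i<d. (u i - c i)^2)"
  have V: "V > 0" using assms by (simp add: V_def order_neq_le_trans sum_nonneg)
  have quadratic: "(\<Sum>i<d. (x i - (c i + r * (u i - c i)))^2) = W - 2 * r * P + r^2 * V" for r
    unfolding W_def P_def V_def sum_distrib_left sum_subtractf[symmetric] sum.distrib[symmetric]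
    by (rule sum.cong) (auto simp: power2_eq_square algebra_simps)
  \<comment> \<open>the quadratic in \<open>r\<close> is minimised at \<open>r = P / V\<close>, the parameter of the projection\<close>
  have "(W - 2 * s * P + s^2 * V) - (W - 2 * (P/V) * P + (P/V)^2 * V) = V * (s - P/V)^2"
    using V by (simp add: field_simps power2_eq_square)
  then have "W - 2 * (P/V) * P + (P/V)^2 * V \<le> W - 2 * s * P + s^2 * V"
    using V by (smt (verit) zero_le_power2 mult_nonneg_nonneg)
  moreover have "proj_line d (c,u) x = (\<lambda>i. c i + (P/V) * (u i - c i))"
    by (simp add: proj_line_def P_def V_def Let_def)
  ultimately have "(\<Sum>i<d. (x i - proj_line d (c,u) x i)^2) \<le> (\<Sum>i<d. (x i - (c i + s * (u i - c i)))^2)"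
    by (simp only: quadratic)
  then show ?thesis unfolding edist_def by (rule real_sqrt_le_mono)
qed

lemma sphere_net_nonempty:
  assumes "0 < d" "c \<in> Rd d" "is_sphere_net d \<epsilon> c N"
  shows "N \<noteq> {}"
proof -
  define y where "y = c(0 := c 0 + 1)"
  have "(\<Sum>i<d. (y i - c i)^2) = (\<Sum>i\<in>{0}. (y i - c i)^2)"
    by (rule sum.mono_neutral_right) (use assms in \<open>auto simp: y_def\<close>)
  then have "edist d y c = 1" by (simp add: edist_def y_def)
  moreover have "y \<in> Rd d" using assms by (auto simp: Rd_def y_def)
  ultimately show ?thesis using assms(3) unfolding is_sphere_net_def by blast
qed

lemma sphere_net_line_dist_le:
  assumes x: "x \<in> Rd d" and c: "c \<in> Rd d"
    and net: "is_sphere_net d \<epsilon> c N" and "N \<noteq> {}"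
  shows "\<exists>u\<in>N. line_dist d x (c,u) \<le> \<epsilon> * edist d x c"
proof -
  have V: "(\<Sum>i<d. (u i - c i)^2) \<noteq> 0" if "u \<in> N" for u
    using net that unfolding is_sphere_net_def edist_def by auto
  define r where "r = edist d x c"
  show ?thesis
  proof (cases "r = 0")
    case True
    obtain u where u: "u \<in> N" using \<open>N \<noteq> {}\<close> by blast
    have "line_dist d x (c,u) \<le> r"
      using proj_line_le[OF V[OF u], of x 0] by (simp add: line_dist_def r_def)
    then show ?thesis using u True unfolding r_def by force
  next
    case False
    then have r: "r > 0" using edist_nonneg[of d x c] by (simp add: r_def)
    define y where "y i = c i + (x i - c i) / r" for i
    have "edist d y c = edist d (\<lambda>i. (1/r) * x i) (\<lambda>i. (1/r) * c i)"
      unfolding edist_def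
      by (intro arg_cong[where f=sqrt] sum.cong) (auto simp: y_def diff_divide_distrib)
    then have "edist d y c = 1" unfolding edist_scale using r by (simp add: r_def)
    moreover have "y \<in> Rd d" using c x by (auto simp: Rd_def y_def)
    ultimately obtain u where u: "u \<in> N" "edist d y u \<le> \<epsilon>"
      using net unfolding is_sphere_net_def by blast
    have "line_dist d x (c,u) \<le> edist d x (\<lambda>i. c i + r * (u i - c i))"
      unfolding line_dist_def by (rule proj_line_le[OF V[OF u(1)]])
    also have "\<dots> = edist d (\<lambda>i. r * y i) (\<lambda>i. r * u i)"
    proof -
      have "x i - (c i + r * (u i - c i)) = r * y i - r * u i" for i
        using r by (simp add: y_def field_simps)
      then show ?thesis unfolding edist_def by simp
    qed
    also have "\<dots> \<le> r * \<epsilon>" using r u by (simp add: edist_scale)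
    finally show ?thesis using u by (auto simp: r_def mult.commute)
  qed
qed

lemma nearest_line_dist_le:
  assumes x: "x \<in> Rd d" and "0 \<le> \<epsilon>"
    and C: "finite C" "C \<noteq> {}" "C \<subseteq> Rd d"
    and net: "\<And>c. c \<in> C \<Longrightarrow> is_sphere_net d \<epsilon> c (N c)"
    and nearest: "\<And>c u. c \<in> C \<Longrightarrow> u \<in> N c \<Longrightarrow> line_dist d x l \<le> line_dist d x (c,u)"
  shows "line_dist d x l \<le> \<epsilon> * setdist d x C"
proof (cases "d = 0")
  case True
  then show ?thesis
    using \<open>0 \<le> \<epsilon>\<close> setdist_nonneg[OF C(1,2)] by (simp add: line_dist_def edist_def)
next
  case False
  have "setdist d x C \<in> edist d x ` C" unfolding setdist_def using C by (intro Min_in) auto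
  then obtain c where c: "c \<in> C" "setdist d x C = edist d x c" by blast
  have "N c \<noteq> {}" using sphere_net_nonempty False C c net by blast
  then obtain u where "u \<in> N c" "line_dist d x (c,u) \<le> \<epsilon> * edist d x c"
    using sphere_net_line_dist_le x C c net by blast
  then show ?thesis using nearest c by fastforce
qed

theorem lemma4p5:
  shows "\<exists>\<beta>::real. \<beta> > 0 \<and>
    (\<forall>(d::nat) (X::pt set) (\<epsilon>::real) (C::pt set) (N::pt \<Rightarrow> pt set)
       (L::(pt \<times> pt) set) (nl::pt \<Rightarrow> pt \<times> pt).
      finite X \<and> X \<subseteq> Rd d \<and> 0 < \<epsilon> \<and> \<epsilon> < 1 \<and>
      finite C \<and> C \<noteq> {} \<and> C \<subseteq> Rd d \<and>
      (\<forall>c\<in>C. is_sphere_net d \<epsilon> c (N c)) \<and>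
      L = {(c, u). c \<in> C \<and> u \<in> N c} \<and>
      (\<forall>x\<in>X. nl x \<in> L \<and> (\<forall>l\<in>L. line_dist d x (nl x) \<le> line_dist d x l))
      \<longrightarrow>
      (\<forall>C' p. finite C' \<and> C' \<noteq> {} \<and> C' \<subseteq> Rd d \<and> 1 \<le> p \<and> p \<le> card X \<longrightarrow>
         \<bar>costp d p (image_mset (\<lambda>x. proj_line d (nl x) x) (mset_set X)) C'
            - costp d p (mset_set X) C'\<bar>
         \<le> \<beta> * \<epsilon> * costp d p (mset_set X) C))"
proof (intro exI[of _ 1] conjI allI impI)
  fix d X \<epsilon> C N L nl C' p
  assume H: "finite X \<and> X \<subseteq> Rd d \<and> 0 < \<epsilon> \<and> \<epsilon> < 1 \<and> finite C \<and> C \<noteq> {} \<and> C \<subseteq> Rd d \<and>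
      (\<forall>c\<in>C. is_sphere_net d \<epsilon> c (N c)) \<and> L = {(c, u). c \<in> C \<and> u \<in> N c} \<and>
      (\<forall>x\<in>X. nl x \<in> L \<and> (\<forall>l\<in>L. line_dist d x (nl x) \<le> line_dist d x l))"
    and H': "finite C' \<and> C' \<noteq> {} \<and> C' \<subseteq> Rd d \<and> 1 \<le> p \<and> p \<le> card X"
  have X: "finite X" and p: "p \<le> card X" and \<epsilon>: "0 \<le> \<epsilon>" using H H' by auto
  define f g h where "f x = setdist d x C'" and "g x = setdist d (proj_line d (nl x) x) C'"
    and "h x = setdist d x C" for x
  have "line_dist d x (nl x) \<le> \<epsilon> * h x" if "x \<in> X" for x
    unfolding h_def using H that by (intro nearest_line_dist_le) auto
  then have "\<bar>g x - f x\<bar> \<le> \<epsilon> * h x" if "x \<in> X" for x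
    using setdist_lipschitz[of C' d "proj_line d (nl x) x" x] H' that
    by (fastforce simp: f_def g_def line_dist_def edist_commute)
  then have "\<bar>top_sum p (image_mset g (mset_set X)) - top_sum p (image_mset f (mset_set X))\<bar>
      \<le> \<epsilon> * top_sum p (image_mset h (mset_set X))"
    using top_sum_le_add[OF X p \<epsilon>, of g f h] top_sum_le_add[OF X p \<epsilon>, of f g h]
    by (force simp: abs_le_iff)
  then show "\<bar>costp d p (image_mset (\<lambda>x. proj_line d (nl x) x) (mset_set X)) C'
      - costp d p (mset_set X) C'\<bar> \<le> 1 * \<epsilon> * costp d p (mset_set X) C"
    using costp_image_mset[of d p "\<lambda>x. x"]
    by (simp add: costp_image_mset f_def[abs_def] g_def[abs_def] h_def[abs_def])
qed (rule zero_less_one)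

end
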